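(* In the setting of the finite systems (see context), for every $t$: $$\det(\lambda I-L1_N(t))=\lambda^{N+2}-C_0\lambda^{N+1}-C_1\lambda^{N}-\dots-C_{N+1},$$ $$\det(\lambda I-L2_N(t))=\lambda^{N+p+1}-\tilde C_0\lambda^{N+p}-\tilde C_1\lambda^{N+p-1}-\dots-\tilde C_{N+p},$$ i.e. the finite rank coefficients $C_v$ and $\tilde C_v$ coincide, up to sign, with the coefficients of the characteristic polynomials of $L1_N$ and $L2_N$.
   Context: Let $p\ge1$, $N\ge 2p-1$, and let $a_0,\dots,a_N$ and $b_0,\dots,b_N$ be nonzero complex numbers (e.g. values at time $t$ of solutions of the finite Bogoyavlensky lattices $\dot a_i=a_i(\prod_{j=1}^p a_{i+j}-\prod_{j=1}^p a_{i-j})$ and $\dot b_i=b_i(\sum_{j=1}^p b_{i+j}-\sum_{j=1}^p b_{i-j})$, $i=0,\dots,N$, with $a_l=b_l=0$ for $l<0$ or $l>N$). $L1_N$ is the $(N+2)\times(N+2)$ matrix (indices $0,\dots,N+1$) with $(L1_N)_{i,i+p}=1$ for $0\le i\le N+1-p$, $(L1_N)_{i+1,i}=a_i$ for $0\le i\le N$, other entries zero; $S^l_k=(L1_N^k)_{l-1,0}$ for $l=1,\dots,p$, $k\ge0$. $C_0,\dots,C_{N+1}$ are the complex numbers with $S^l_k=\sum_{v=0}^{N+1}C_vS^l_{k-v-1}$ for all $k\ge N+2$, $l=1,\dots,p$. $L2_N$ is the $(N+p+1)\times(N+p+1)$ matrix (indices $0,\dots,N+p$) with $(L2_N)_{i,i+1}=1$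 for $0\le i\le N+p-1$, $(L2_N)_{i+p,i}=b_i$ for $0\le i\le N$, other entries zero; $\tilde S^l_k=(L2_N^k)_{0,l-1}$; $\tilde C_0,\dots,\tilde C_{N+p}$ are the complex numbers with $\tilde S^l_k=\sum_{v=0}^{N+p}\tilde C_v\tilde S^l_{k-v-1}$ for all $k\ge N+p+1$, $l=1,\dots,p$. Standing fact from the paper: with $\alpha_{i,j}=S^{\operatorname{rem}(i,p)+1}_{\lfloor i/p\rfloor+j}$, the determinants $\det(\alpha_{i,j})_{i,j=0}^k$ are nonzero for $k=0,\dots,N+1$ and the matrix $(\alpha_{i,j})_{i,j\ge0}$ has rank $N+2$ (analogously for the $\tilde S$ with $\tilde\alpha_{i,j}=\tilde S^{\operatorname{rem}(j,p)+1}_{i+\lfloor j/p\rfloor}$, orders up to $N+p+1$), so these coefficients are uniquely determined. *)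

theory Defs
  imports "Jordan_Normal_Form.Char_Poly"
begin

definition L1 :: "nat \<Rightarrow> nat \<Rightarrow> (nat \<Rightarrow> complex) \<Rightarrow> complex mat" where
  "L1 p N a = mat (N+2) (N+2)
     (\<lambda>(i,j). if j = i + p then 1 else if i = j + 1 \<and> j \<le> N then a j else 0)"

definition L2 :: "nat \<Rightarrow> nat \<Rightarrow> (nat \<Rightarrow> complex) \<Rightarrow> complex mat" where
  "L2 p N b = mat (N+p+1) (N+p+1)
     (\<lambda>(i,j). if j = i + 1 then 1 else if i = j + p \<and> j \<le> N then b j else 0)"

definition S1 :: "nat \<Rightarrow> nat \<Rightarrow> (nat \<Rightarrow> complex) \<Rightarrow> nat \<Rightarrow> nat \<Rightarrow> complex" where
  "S1 p N a l k = (L1 p N a ^\<^sub>m k) $$ (l - 1, 0)"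

definition S2 :: "nat \<Rightarrow> nat \<Rightarrow> (nat \<Rightarrow> complex) \<Rightarrow> nat \<Rightarrow> nat \<Rightarrow> complex" where
  "S2 p N b l k = (L2 p N b ^\<^sub>m k) $$ (0, l - 1)"

end

theory Submission
  imports Defs
begin

text \<open>The matrix \<open>L1\<close> and the transpose of \<open>L2\<close> are band matrices whose only nonzero
  entries lie on the subdiagonal and on the \<open>p\<close>-th superdiagonal, and the entries on the
  subdiagonal do not vanish. For such a matrix \<open>B\<close> the Krylov vectors \<open>B\<^sup>m e\<^sub>0\<close>, \<open>m < n\<close>,
  form a triangular basis, so \<open>B\<close> is similar to the companion matrix of any linear relation
  expressing \<open>B\<^sup>n e\<^sub>0\<close> through them. The hypotheses give such a relation only on the first \<open>p\<close>
  coordinates, but for all shifts \<open>B\<^sup>m\<close>. The defects of the relation form a \<open>B\<close>-orbit, and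
  row \<open>j - p\<close> of \<open>B\<close> expresses coordinate \<open>j\<close> of an orbit vector through lower coordinates
  of it and of its image; since the superdiagonal entries do not vanish either, vanishing on the
  first \<open>p\<close> coordinates propagates to all of them.\<close>

definition companion_mat :: "nat \<Rightarrow> (nat \<Rightarrow> 'a::comm_ring_1) \<Rightarrow> 'a mat" where
  "companion_mat n c = mat n n (\<lambda>(i,j). if i = Suc j then 1 else if j = n - 1 then c i else 0)"

lemma companion_mat_carrier [simp]: "companion_mat n c \<in> carrier_mat n n"
  unfolding companion_mat_def by simp

lemma char_poly_companion_mat_0 [simp]: "char_poly (companion_mat 0 c) = 1"
  unfolding char_poly_defs companion_mat_def by (simp add: det_def)

lemma char_poly_companion_mat_Suc:
  "char_poly (companion_mat (Suc n) c) =
     [:0,1:] * char_poly (companion_mat n (\<lambda>k. c (Suc k))) - [:c 0:]"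
proof -
  define X where "X = char_poly_matrix (companion_mat (Suc n) c)"
  have X: "X \<in> carrier_mat (Suc n) (Suc n)" unfolding X_def by simp
  have X_entry: "X $$ (i,j) = (if i = j then [:0,1:] else 0)
      - (if i = Suc j then 1 else if j = n then [:c i:] else 0)"
    if "i < Suc n" "j < Suc n" for i j
    using that unfolding X_def char_poly_matrix_def companion_mat_def by (auto simp: one_pCons)
  show ?thesis
  proof (cases "n = 0")
    case True
    have "cofactor X 0 0 = 1"
      using X True by (simp add: cofactor_def det_def mat_delete_def)
    then have "det X = X $$ (0,0)"
      using laplace_expansion_row[OF X, of 0] True by simp
    then show ?thesis using X_entry[of 0 0] True by (simp add: X_def char_poly_def)
  next
    case False
    have minor_0: "cofactor X 0 0 = char_poly (companion_mat n (\<lambda>k. c (Suc k)))"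
    proof -
      have "mat_delete X 0 0 = char_poly_matrix (companion_mat n (\<lambda>k. c (Suc k)))"
        by (rule eq_matI) (use X in \<open>auto simp: mat_delete_def X_entry char_poly_matrix_def
            companion_mat_def one_pCons\<close>)
      then show ?thesis unfolding cofactor_def char_poly_def by simp
    qed
    have minor_n: "cofactor X 0 n = 1"
    proof -
      have "upper_triangular (mat_delete X 0 n)"
        by (rule upper_triangularI) (use X in \<open>auto simp: mat_delete_def X_entry\<close>)
      moreover have "diag_mat (mat_delete X 0 n) = replicate n (-1)"
        by (rule nth_equalityI) (use X in \<open>auto simp: diag_mat_def mat_delete_def X_entry\<close>)
      ultimately have "det (mat_delete X 0 n) = (-1)^n"
        using det_upper_triangular mat_delete_carrier[OF X] by fastforce
      then show ?thesis unfolding cofactor_def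
        by (simp flip: power_add add: power_mult_distrib[symmetric])
    qed
    have "char_poly (companion_mat (Suc n) c) = (\<Sum>j<Suc n. X $$ (0,j) * cofactor X 0 j)"
      using laplace_expansion_row[OF X, of 0] unfolding X_def char_poly_def by simp
    also have "\<dots> = (\<Sum>j<Suc n. (if j = 0 then [:0,1:] * cofactor X 0 0 else 0)
        + (if j = n then [:- c 0:] * cofactor X 0 n else 0))"
      by (rule sum.cong) (use False in \<open>auto simp: X_entry\<close>)
    also have "\<dots> = [:0,1:] * cofactor X 0 0 + [:- c 0:] * cofactor X 0 n"
      by (simp add: sum.distrib)
    finally show ?thesis by (simp add: minor_0 minor_n)
  qed
qed

lemma char_poly_companion_mat:
  "char_poly (companion_mat n c) = monom 1 n - (\<Sum>k<n. monom (c k) k)"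
proof (induction n arbitrary: c)
  case 0
  show ?case by simp
next
  case (Suc n)
  have x_monom: "[:0,1:] * monom a k = monom a (Suc k)" for a :: 'a and k
    by (simp add: monom_Suc)
  have "[:0,1:] * char_poly (companion_mat n (\<lambda>k. c (Suc k)))
      = monom 1 (Suc n) - (\<Sum>k<n. monom (c (Suc k)) (Suc k))"
    by (simp only: Suc.IH right_diff_distrib sum_distrib_left x_monom)
  moreover have "(\<Sum>k<Suc n. monom (c k) k) = [:c 0:] + (\<Sum>k<n. monom (c (Suc k)) (Suc k))"
    by (simp only: sum.lessThan_Suc_shift monom_0)
  ultimately show ?case by (simp add: char_poly_companion_mat_Suc)
qed

lemma mult_companion_mat_index:
  assumes K: "K \<in> carrier_mat m n" and i: "i < m" and j: "j < n"
  shows "(K * companion_mat n c) $$ (i,j) =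
    (if j = n - 1 then (\<Sum>k<n. K $$ (i,k) * c k) else K $$ (i, Suc j))"
proof -
  have "(K * companion_mat n c) $$ (i,j) =
      (\<Sum>k<n. K $$ (i,k) * (if k = Suc j then 1 else if j = n - 1 then c k else 0))"
    using K i j by (simp add: companion_mat_def scalar_prod_def lessThan_atLeast0)
  also have "\<dots> = (if j = n - 1 then (\<Sum>k<n. K $$ (i,k) * c k) else K $$ (i, Suc j))"
    using j by (cases "j = n - 1") (auto simp: if_distrib cong: if_cong)
  finally show ?thesis .
qed

lemma similar_mat_of_intertwining:
  fixes A :: "'a::field mat"
  assumes A: "A \<in> carrier_mat n n" and B: "B \<in> carrier_mat n n" and K: "K \<in> carrier_mat n n"
    and det_K: "det K \<noteq> 0" and AK: "A * K = K * B"
  shows "similar_mat A B"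
proof -
  from det_non_zero_imp_unit[OF K det_K, unfolded Units_def, of "()"]
  obtain K' where K': "K' \<in> carrier_mat n n" and "K' * K = 1\<^sub>m n" and KK': "K * K' = 1\<^sub>m n"
    by (auto simp: ring_mat_def)
  moreover have "A = K * B * K'"
  proof -
    have "A = A * K * K'" using A K K' KK' by (simp add: assoc_mult_mat[of A n n K n K' n])
    then show ?thesis by (simp add: AK)
  qed
  ultimately show ?thesis using A B K by (intro similar_matI[of A B K K' n]) auto
qed

lemma char_poly_of_triangular_krylov:
  fixes A :: "'a::field mat" and x :: "nat \<Rightarrow> nat \<Rightarrow> 'a"
  assumes A: "A \<in> carrier_mat n n"
    and x_Suc: "\<And>m i. i < n \<Longrightarrow> x (Suc m) i = (\<Sum>k<n. A $$ (i,k) * x m k)"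
    and x_triangular: "\<And>i j. i < n \<Longrightarrow> j < i \<Longrightarrow> x j i = 0"
    and x_diag: "\<And>j. j < n \<Longrightarrow> x j j \<noteq> 0"
    and x_n: "\<And>i. i < n \<Longrightarrow> x n i = (\<Sum>k<n. c k * x k i)"
  shows "char_poly A = monom 1 n - (\<Sum>k<n. monom (c k) k)"
proof -
  define K where "K = mat n n (\<lambda>(i,j). x j i)"
  have K: "K \<in> carrier_mat n n" unfolding K_def by simp
  have "det K = (\<Prod>i = 0..<n. K $$ (i,i))"
    using det_upper_triangular[OF _ K] K
    by (simp add: K_def upper_triangular_def x_triangular prod_list_diag_prod)
  then have det_K: "det K \<noteq> 0"
    by (simp add: K_def x_diag)
  have "A * K = K * companion_mat n c"
  proof (rule eq_matI)
    fix i j assume "i < dim_row (K * companion_mat n c)" "j < dim_col (K * companion_mat n c)"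
    then have i: "i < n" and j: "j < n" using K by (auto simp: companion_mat_def)
    have "(A * K) $$ (i,j) = x (Suc j) i"
      using A K i j by (simp add: x_Suc scalar_prod_def K_def lessThan_atLeast0)
    also have "\<dots> = (if j = n - 1 then (\<Sum>k<n. K $$ (i,k) * c k) else K $$ (i, Suc j))"
      using i j by (simp add: K_def x_n mult.commute)
    also have "\<dots> = (K * companion_mat n c) $$ (i,j)"
      using mult_companion_mat_index[OF K i j] by simp
    finally show "(A * K) $$ (i,j) = (K * companion_mat n c) $$ (i,j)" .
  qed (use A K in \<open>auto simp: companion_mat_def\<close>)
  then have "similar_mat A (companion_mat n c)"
    by (intro similar_mat_of_intertwining[OF A _ K det_K]) simp
  then show ?thesis
    by (simp add: char_poly_similar char_poly_companion_mat)
qed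

definition band_mat :: "nat \<Rightarrow> nat \<Rightarrow> (nat \<Rightarrow> 'a) \<Rightarrow> (nat \<Rightarrow> 'a) \<Rightarrow> 'a::zero mat" where
  "band_mat n p s t = mat n n (\<lambda>(i,k). if k + 1 = i then s i else if k = i + p then t i else 0)"

lemma band_mat_carrier [simp]: "band_mat n p s t \<in> carrier_mat n n"
  unfolding band_mat_def by simp

lemma sum_band_mat_row:
  fixes s t v :: "nat \<Rightarrow> 'a::semiring_0"
  assumes p: "0 < p" and i: "i < n"
  shows "(\<Sum>k<n. band_mat n p s t $$ (i,k) * v k) =
    (if 0 < i then s i * v (i - 1) else 0) + (if i + p < n then t i * v (i + p) else 0)"
proof -
  have "(\<Sum>k<n. band_mat n p s t $$ (i,k) * v k) =
      (\<Sum>k<n. (if k + 1 = i then s i * v k else 0) + (if k = i + p then t i * v k else 0))"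
    by (rule sum.cong) (use p i in \<open>auto simp: band_mat_def\<close>)
  also have "\<dots> = (if 0 < i then s i * v (i - 1) else 0) + (if i + p < n then t i * v (i + p) else 0)"
    using i by (cases i) (auto simp: sum.distrib)
  finally show ?thesis .
qed

lemma band_orbit_vanishes:
  fixes s t :: "nat \<Rightarrow> 'a::idom" and y :: "nat \<Rightarrow> nat \<Rightarrow> 'a"
  assumes p: "0 < p" and t_nz: "\<And>i. i + p < n \<Longrightarrow> t i \<noteq> 0"
    and y_Suc: "\<And>m i. i < n \<Longrightarrow> y (Suc m) i = (\<Sum>k<n. band_mat n p s t $$ (i,k) * y m k)"
    and y_head: "\<And>m l. l < p \<Longrightarrow> y m l = 0"
  shows "j < n \<Longrightarrow> y m j = 0"
proof (induction j arbitrary: m rule: less_induct)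
  case (less j)
  show ?case
  proof (cases "j < p")
    case True
    then show ?thesis by (rule y_head)
  next
    case False
    define i where "i = j - p"
    have i: "i < n" "i + p = j" "i < j" using False less.prems p by (auto simp: i_def)
    \<comment> \<open>row \<open>j - p\<close> of the band recurrence solves for the coordinate \<open>j\<close>\<close>
    have "y (Suc m) i = (if 0 < i then s i * y m (i - 1) else 0) + t i * y m j"
      using y_Suc[OF i(1)] sum_band_mat_row[OF p i(1), of s t "y m"] i less.prems by simp
    moreover have "y (Suc m) i = 0" "0 < i \<Longrightarrow> y m (i - 1) = 0"
      using less.IH i by auto
    ultimately have "t i * y m j = 0" by (simp split: if_splits)
    then show ?thesis using t_nz[of i] i less.prems by simp
  qed
qed

lemma band_krylov_triangular:
  fixes s t :: "nat \<Rightarrow> 'a::idom" and x :: "nat \<Rightarrow> nat \<Rightarrow> 'a"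
  assumes p: "0 < p" and s_nz: "\<And>i. 0 < i \<Longrightarrow> i < n \<Longrightarrow> s i \<noteq> 0"
    and x_Suc: "\<And>m i. i < n \<Longrightarrow> x (Suc m) i = (\<Sum>k<n. band_mat n p s t $$ (i,k) * x m k)"
    and x_0: "\<And>i. i < n \<Longrightarrow> x 0 i = (if i = 0 then 1 else 0)"
  shows "(\<forall>i<n. j < i \<longrightarrow> x j i = 0) \<and> (j < n \<longrightarrow> x j j \<noteq> 0)"
proof (induction j)
  case 0
  show ?case using x_0 by simp
next
  case (Suc j)
  have x_Suc': "x (Suc j) i = (if 0 < i then s i * x j (i - 1) else 0)
      + (if i + p < n then t i * x j (i + p) else 0)" if "i < n" for i
    using x_Suc[OF that] sum_band_mat_row[OF p that, of s t "x j"] by simp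
  show ?case
    using Suc.IH s_nz by (auto simp: x_Suc')
qed

lemma pow_mat_Suc_left:
  assumes A: "A \<in> carrier_mat n n"
  shows "A ^\<^sub>m Suc m = A * A ^\<^sub>m m"
proof (induction m)
  case 0
  show ?case using A by simp
next
  case (Suc m)
  have "A ^\<^sub>m Suc (Suc m) = (A * A ^\<^sub>m m) * A" using Suc by simp
  also have "\<dots> = A * (A ^\<^sub>m m * A)" using A by (simp add: assoc_mult_mat[of _ n n _ n _ n])
  finally show ?case by simp
qed

lemma pow_mat_Suc_index:
  assumes A: "A \<in> carrier_mat n n" and i: "i < n" and j: "j < n"
  shows "(A ^\<^sub>m Suc m) $$ (i,j) = (\<Sum>k<n. A $$ (i,k) * (A ^\<^sub>m m) $$ (k,j))"
  unfolding pow_mat_Suc_left[OF A] using A i j by (simp add: scalar_prod_def lessThan_atLeast0)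

lemma char_poly_band_mat:
  fixes s t C :: "nat \<Rightarrow> 'a::field"
  assumes p: "0 < p"
    and s_nz: "\<And>i. 0 < i \<Longrightarrow> i < n \<Longrightarrow> s i \<noteq> 0"
    and t_nz: "\<And>i. i + p < n \<Longrightarrow> t i \<noteq> 0"
    and rec: "\<And>k l. n \<le> k \<Longrightarrow> l < p \<Longrightarrow> (band_mat n p s t ^\<^sub>m k) $$ (l,0) =
      (\<Sum>v<n. C v * (band_mat n p s t ^\<^sub>m (k - v - 1)) $$ (l,0))"
  shows "char_poly (band_mat n p s t) = monom 1 n - (\<Sum>v<n. monom (C v) (n - 1 - v))"
proof -
  let ?B = "band_mat n p s t"
  define x where "x m i = (?B ^\<^sub>m m) $$ (i,0)" for m i
  define c where "c k = C (n - 1 - k)" for k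
  have x_Suc: "x (Suc m) i = (\<Sum>k<n. ?B $$ (i,k) * x m k)" if "i < n" for m i
    using pow_mat_Suc_index[OF band_mat_carrier[of n p s t] that, of 0 m] that unfolding x_def by simp
  have x_0: "x 0 i = (if i = 0 then 1 else 0)" if "i < n" for i
    using that unfolding x_def by (simp add: band_mat_def)
  note x_triangular = band_krylov_triangular[OF p s_nz x_Suc x_0]
  \<comment> \<open>the defects of the recurrence form an orbit vanishing on the first \<open>p\<close> rows\<close>
  define y where "y m i = x (m + n) i - (\<Sum>k<n. c k * x (m + k) i)" for m i
  have y_Suc: "y (Suc m) i = (\<Sum>j<n. ?B $$ (i,j) * y m j)" if "i < n" for m i
  proof -
    have "y (Suc m) i = (\<Sum>j<n. ?B $$ (i,j) * x (m + n) j)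
        - (\<Sum>k<n. c k * (\<Sum>j<n. ?B $$ (i,j) * x (m + k) j))"
      using that by (simp add: y_def x_Suc)
    also have "\<dots> = (\<Sum>j<n. ?B $$ (i,j) * y m j)"
      unfolding y_def right_diff_distrib sum_subtractf sum_distrib_left
      by (subst sum.swap) (simp add: mult.left_commute)
    finally show ?thesis .
  qed
  have y_head: "y m l = 0" if "l < p" for m l
  proof -
    have "x (m + n) l = (\<Sum>v<n. C v * x (m + (n - Suc v)) l)"
      using rec[of "m + n" l] that unfolding x_def by (simp add: algebra_simps)
    also have "\<dots> = (\<Sum>k<n. c k * x (m + k) l)"
      by (subst sum.nat_diff_reindex[symmetric]) (auto simp: c_def intro!: sum.cong)
    finally show ?thesis by (simp add: y_def)
  qed
  have "char_poly ?B = monom 1 n - (\<Sum>k<n. monom (c k) k)"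
  proof (rule char_poly_of_triangular_krylov[where x = x and c = c, OF band_mat_carrier x_Suc])
    show "x n i = (\<Sum>k<n. c k * x k i)" if "i < n" for i
      using band_orbit_vanishes[where y = y, OF p t_nz y_Suc y_head that, of 0] by (simp add: y_def)
  qed (use x_triangular in auto)
  also have "(\<Sum>k<n. monom (c k) k) = (\<Sum>v<n. monom (C v) (n - 1 - v))"
    by (subst sum.nat_diff_reindex[symmetric]) (auto simp: c_def intro!: sum.cong)
  finally show ?thesis .
qed

lemma transpose_pow_mat:
  fixes A :: "'a::comm_semiring_1 mat"
  assumes A: "A \<in> carrier_mat n n"
  shows "transpose_mat (A ^\<^sub>m k) = transpose_mat A ^\<^sub>m k"
proof (induction k)
  case 0
  show ?case using A by simp
next
  case (Suc k)
  have "transpose_mat (A ^\<^sub>m Suc k) = transpose_mat A * transpose_mat (A ^\<^sub>m k)"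
    using A transpose_mult[of "A ^\<^sub>m k" n n A n] by simp
  also have "\<dots> = transpose_mat A ^\<^sub>m Suc k"
    using pow_mat_Suc_left[of "transpose_mat A" n k] A by (simp add: Suc.IH)
  finally show ?case .
qed

lemma L1_eq_band_mat: "0 < p \<Longrightarrow> L1 p N a = band_mat (N+2) p (\<lambda>i. a (i - 1)) (\<lambda>_. 1)"
  unfolding L1_def band_mat_def by (rule eq_matI) auto

lemma transpose_L2_eq_band_mat: "transpose_mat (L2 p N b) = band_mat (N+p+1) p (\<lambda>_. 1) b"
  unfolding L2_def band_mat_def by (rule eq_matI) auto

lemma char_poly_L1:
  fixes a C :: "nat \<Rightarrow> complex"
  assumes p: "p \<ge> 1" and a_nz: "\<forall>i\<le>N. a i \<noteq> 0"
    and C_rec: "\<forall>k\<ge>N+2. \<forall>l\<in>{1..p}.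
        S1 p N a l k = (\<Sum>v=0..N+1. C v * S1 p N a l (k - v - 1))"
  shows "char_poly (L1 p N a) = monom 1 (N+2) - (\<Sum>v=0..N+1. monom (C v) (N+1-v))"
proof -
  have L1: "L1 p N a = band_mat (N+2) p (\<lambda>i. a (i - 1)) (\<lambda>_. 1)"
    using p by (simp add: L1_eq_band_mat)
  have "char_poly (band_mat (N+2) p (\<lambda>i. a (i - 1)) (\<lambda>_. 1))
      = monom 1 (N+2) - (\<Sum>v<N+2. monom (C v) (N+2 - 1 - v))"
  proof (rule char_poly_band_mat)
    fix k l assume k: "N+2 \<le> k" and l: "l < p"
    have "S1 p N a (Suc l) k = (\<Sum>v<N+2. C v * S1 p N a (Suc l) (k - v - 1))"
      using C_rec k l by (simp add: atLeast0AtMost lessThan_Suc_atMost)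
    then show "(band_mat (N+2) p (\<lambda>i. a (i - 1)) (\<lambda>_. 1) ^\<^sub>m k) $$ (l,0) =
      (\<Sum>v<N+2. C v * (band_mat (N+2) p (\<lambda>i. a (i - 1)) (\<lambda>_. 1) ^\<^sub>m (k - v - 1)) $$ (l,0))"
      by (simp add: S1_def L1)
  qed (use p a_nz in auto)
  then show ?thesis
    by (simp add: L1 atLeast0AtMost lessThan_Suc_atMost)
qed

lemma char_poly_L2:
  fixes b Ct :: "nat \<Rightarrow> complex"
  assumes p: "p \<ge> 1" and b_nz: "\<forall>i\<le>N. b i \<noteq> 0"
    and Ct_rec: "\<forall>k\<ge>N+p+1. \<forall>l\<in>{1..p}.
        S2 p N b l k = (\<Sum>v=0..N+p. Ct v * S2 p N b l (k - v - 1))"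
  shows "char_poly (L2 p N b) = monom 1 (N+p+1) - (\<Sum>v=0..N+p. monom (Ct v) (N+p-v))"
proof -
  have L2: "L2 p N b \<in> carrier_mat (N+p+1) (N+p+1)" by (simp add: L2_def)
  have S2_band: "S2 p N b (Suc l) k = (band_mat (N+p+1) p (\<lambda>_. 1) b ^\<^sub>m k) $$ (l,0)"
    if "l < N+p+1" for l k
  proof -
    have "(band_mat (N+p+1) p (\<lambda>_. 1) b ^\<^sub>m k) $$ (l,0) = transpose_mat (L2 p N b ^\<^sub>m k) $$ (l,0)"
      by (simp only: transpose_L2_eq_band_mat[symmetric] transpose_pow_mat[OF L2])
    then show ?thesis using that L2 by (simp add: S2_def)
  qed
  have "char_poly (band_mat (N+p+1) p (\<lambda>_. 1) b)
      = monom 1 (N+p+1) - (\<Sum>v<N+p+1. monom (Ct v) (N+p+1 - 1 - v))"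
  proof (rule char_poly_band_mat)
    fix k l assume k: "N+p+1 \<le> k" and l: "l < p"
    have "S2 p N b (Suc l) k = (\<Sum>v<N+p+1. Ct v * S2 p N b (Suc l) (k - v - 1))"
      using Ct_rec k l by (simp add: atLeast0AtMost lessThan_Suc_atMost)
    then show "(band_mat (N+p+1) p (\<lambda>_. 1) b ^\<^sub>m k) $$ (l,0) =
      (\<Sum>v<N+p+1. Ct v * (band_mat (N+p+1) p (\<lambda>_. 1) b ^\<^sub>m (k - v - 1)) $$ (l,0))"
      using l by (simp add: S2_band)
  qed (use p b_nz in auto)
  then show ?thesis
    using char_poly_transpose_mat[OF L2]
    by (simp add: transpose_L2_eq_band_mat atLeast0AtMost lessThan_Suc_atMost)
qed

theorem proposition1:
  fixes p N :: nat and a b C Ct :: "nat \<Rightarrow> complex"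
  assumes p: "p \<ge> 1" and N: "N \<ge> 2 * p - 1"
    and a_nz: "\<forall>i\<le>N. a i \<noteq> 0" and b_nz: "\<forall>i\<le>N. b i \<noteq> 0"
    and C_rec: "\<forall>k\<ge>N+2. \<forall>l\<in>{1..p}.
        S1 p N a l k = (\<Sum>v=0..N+1. C v * S1 p N a l (k - v - 1))"
    and Ct_rec: "\<forall>k\<ge>N+p+1. \<forall>l\<in>{1..p}.
        S2 p N b l k = (\<Sum>v=0..N+p. Ct v * S2 p N b l (k - v - 1))"
  shows "char_poly (L1 p N a) = monom 1 (N+2) - (\<Sum>v=0..N+1. monom (C v) (N+1-v))
       \<and> char_poly (L2 p N b) = monom 1 (N+p+1) - (\<Sum>v=0..N+p. monom (Ct v) (N+p-v))"
  \<comment> \<open>the bound on \<open>N\<close> is unused: it only serves to make \<open>C\<close> and \<open>Ct\<close> exist uniquely\<close>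
  using char_poly_L1[OF p a_nz C_rec] char_poly_L2[OF p b_nz Ct_rec] by simp

end
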